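(* Let $X=\{0,1,2,3\}$ and let $a,b,c$ be the transformations of $X^\ast$ defined recursively (with $\emptyset\mapsto\emptyset$) by $a(0w)=1\,a(w)$, $a(1w)=0w$, $a(2w)=2w$, $a(3w)=3w$; $b(0w)=2\,b(w)$, $b(2w)=0w$, $b(1w)=1w$, $b(3w)=3w$; $c(0w)=3\,c(w)$, $c(3w)=0w$, $c(1w)=1w$, $c(2w)=2w$. For $n\ge 1$ let $A_n=a_n+a_n^{-1}+b_n+b_n^{-1}+c_n+c_n^{-1}$, where $a_n,b_n,c_n$ are the $4^n\times 4^n$ permutation matrices of the actions of $a,b,c$ on $X^n$, and let $P_n(\lambda)=\det(\lambda I-A_n)$. Then for every $n\ge1$, $$P_{n+1}(\lambda)=(\lambda-4)^{2\cdot 4^n}\,P_n(f(\lambda)),\qquad f(\lambda)=\lambda^2-4\lambda-6,$$ and $P_1(\lambda)=(\lambda-6)(\lambda+2)(\lambda-4)^2$.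
   Context: $A_n$ is the adjacency matrix of the $n$-th Schreier graph of the group generated by $a,b,c$ (the star automaton group of the star with 3 leaves) acting on words of length $n$; $P_n$ is its (monic) characteristic polynomial. *)

theory Defs
  imports "Jordan_Normal_Form.Char_Poly"
begin

fun act_a :: "nat list \<Rightarrow> nat list" where
  "act_a [] = []"
| "act_a (x # w) = (if x = 0 then 1 # act_a w else if x = 1 then 0 # w else x # w)"

fun act_b :: "nat list \<Rightarrow> nat list" where
  "act_b [] = []"
| "act_b (x # w) = (if x = 0 then 2 # act_b w else if x = 2 then 0 # w else x # w)"

fun act_c :: "nat list \<Rightarrow> nat list" where
  "act_c [] = []"
| "act_c (x # w) = (if x = 0 then 3 # act_c w else if x = 3 then 0 # w else x # w)"

definition words :: "nat \<Rightarrow> nat list set" where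
  "words n = {w. length w = n \<and> set w \<subseteq> {0..<4}}"

text \<open>Indexing X^n by {0..<4^n}: base-4 digits, first letter least significant.\<close>
definition word_of_index :: "nat \<Rightarrow> nat \<Rightarrow> nat list" where
  "word_of_index n i = map (\<lambda>k. i div 4 ^ k mod 4) [0..<n]"

definition perm_mat :: "nat \<Rightarrow> (nat list \<Rightarrow> nat list) \<Rightarrow> int mat" where
  "perm_mat n g = mat (4 ^ n) (4 ^ n)
     (\<lambda>(i, j). if g (word_of_index n j) = word_of_index n i then 1 else 0)"

definition perm_mat_inv :: "nat \<Rightarrow> (nat list \<Rightarrow> nat list) \<Rightarrow> int mat" where
  "perm_mat_inv n g = perm_mat n (the_inv_into (words n) g)"

definition schreier_adj :: "nat \<Rightarrow> int mat" where
  "schreier_adj n =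
     perm_mat n act_a + perm_mat_inv n act_a +
     perm_mat n act_b + perm_mat_inv n act_b +
     perm_mat n act_c + perm_mat_inv n act_c"

definition P :: "nat \<Rightarrow> int poly" where
  "P n = char_poly (schreier_adj n)"

end

theory Submission
  imports Defs
begin

(* Sort the words of length n + 1 by their first letter.  For x <> 0, the generator g_x
   swapping 0 and x joins x w to 0 w and 0 w to x g_x(w), while the other two generators fix
   x w and give it four loops.  Hence, with N = 4^n and G_x the permutation matrix of g_x on
   X^n, A_(n+1) = [[0, B^T], [B, 4 I]], where B stacks the three blocks I + G_x.  The G_x are
   orthogonal, so B^T B = 6 I + A_n, and the Schur complement of the corner (lambda - 4) I gives
     (lambda - 4)^N P_(n+1)(lambda) = (lambda - 4)^(3N) det (lambda (lambda - 4) I - B^T B)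
                                    = (lambda - 4)^(3N) P_n(lambda^2 - 4 lambda - 6). *)

section \<open>Block matrices and characteristic polynomials\<close>

lemma det_permute_rows_cols:
  assumes A: "A \<in> carrier_mat m m" and \<sigma>: "\<sigma> permutes {0..<m}"
  shows "det (mat m m (\<lambda>(i, j). A $$ (\<sigma> i, \<sigma> j))) = det A"
proof -
  have \<sigma>_lt: "\<sigma> i < m" if "i < m" for i
    using permutes_in_image[OF \<sigma>] that by simp
  define A' where "A' = mat m m (\<lambda>(i, j). A $$ (i, \<sigma> j))"
  have A': "A' \<in> carrier_mat m m" unfolding A'_def by simp
  have "mat m m (\<lambda>(i, j). A $$ (\<sigma> i, \<sigma> j)) = mat m m (\<lambda>(i, j). A' $$ (\<sigma> i, j))"
    by (rule eq_matI) (auto simp: A'_def \<sigma>_lt)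
  then have rows: "det (mat m m (\<lambda>(i, j). A $$ (\<sigma> i, \<sigma> j))) = of_int (sign \<sigma>) * det A'"
    using det_permute_rows[OF A' \<sigma>] by simp
  have "A'\<^sup>T = mat m m (\<lambda>(i, j). A\<^sup>T $$ (\<sigma> i, j))"
    by (rule eq_matI) (use A in \<open>auto simp: A'_def \<sigma>_lt\<close>)
  then have "det A' = det (mat m m (\<lambda>(i, j). A\<^sup>T $$ (\<sigma> i, j)))"
    using det_transpose[OF A'] by simp
  also have "\<dots> = of_int (sign \<sigma>) * det A"
    using det_permute_rows[of "A\<^sup>T" m \<sigma>] A \<sigma> det_transpose[OF A] by simp
  finally have cols: "det A' = of_int (sign \<sigma>) * det A" .
  have "of_int (sign \<sigma>) * of_int (sign \<sigma>) = (1 :: 'a)"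
    by (simp add: sign_def)
  with rows cols show ?thesis
    by (metis mult.assoc mult_1)
qed

lemma char_poly_permute:
  assumes A: "A \<in> carrier_mat m m" and \<sigma>: "\<sigma> permutes {0..<m}"
  shows "char_poly (mat m m (\<lambda>(i, j). A $$ (\<sigma> i, \<sigma> j))) = char_poly A"
proof -
  have \<sigma>_lt: "\<sigma> i < m" if "i < m" for i
    using permutes_in_image[OF \<sigma>] that by simp
  have \<sigma>_eq: "\<sigma> i = \<sigma> j \<longleftrightarrow> i = j" for i j
    using permutes_inj[OF \<sigma>] by (simp add: inj_eq)
  have "char_poly_matrix (mat m m (\<lambda>(i, j). A $$ (\<sigma> i, \<sigma> j)))
      = mat m m (\<lambda>(i, j). char_poly_matrix A $$ (\<sigma> i, \<sigma> j))"
    by (rule eq_matI) (use A in \<open>auto simp: char_poly_matrix_def \<sigma>_lt \<sigma>_eq\<close>)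
  then show ?thesis
    unfolding char_poly_def
    using det_permute_rows_cols[OF char_poly_matrix_closed[OF A] \<sigma>] by simp
qed

definition grid_transpose :: "nat \<Rightarrow> nat \<Rightarrow> nat \<Rightarrow> nat" where
  "grid_transpose m r p = (if p < m * r then p div r + m * (p mod r) else p)"

lemma grid_transpose_permutes: "grid_transpose m r permutes {0..<m * r}"
proof (rule bij_imp_permutes)
  have div_lt: "p div r < m" if "p < m * r" for p
    using that by (simp add: less_mult_imp_div_less)
  then have mod_div: "grid_transpose m r p mod m = p div r" "grid_transpose m r p div m = p mod r"
    if "p < m * r" for p
    using that div_lt[OF that] by (auto simp: grid_transpose_def div_add1_eq)
  have inj: "inj_on (grid_transpose m r) {0..<m * r}"
    by (rule inj_onI) (metis atLeastLessThan_iff div_mod_decomp mod_div)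
  have lt: "grid_transpose m r p < m * r" if "p < m * r" for p
  proof -
    have "0 < r"
      using that by (cases r) auto
    then have "m * (p mod r + 1) \<le> m * r"
      by (intro mult_le_mono2) (simp add: Suc_le_eq)
    then show ?thesis
      using that div_lt[OF that] by (simp add: grid_transpose_def algebra_simps)
  qed
  have "grid_transpose m r ` {0..<m * r} = {0..<m * r}"
    by (rule endo_inj_surj) (use inj lt in auto)
  with inj show "bij_betw (grid_transpose m r) {0..<m * r} {0..<m * r}"
    by (simp add: bij_betw_def)
qed (simp add: grid_transpose_def)

lemma char_poly_pcompose:
  assumes A: "A \<in> carrier_mat n n"
  shows "char_poly A \<circ>\<^sub>p q = det (q \<cdot>\<^sub>m 1\<^sub>m n - map_mat (\<lambda>a. [:a:]) A)"
proof -
  have "map_mat (\<lambda>p. p \<circ>\<^sub>p q) (char_poly_matrix A) = q \<cdot>\<^sub>m 1\<^sub>m n - map_mat (\<lambda>a. [:a:]) A"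
    by (rule eq_matI) (use A in \<open>auto simp: char_poly_matrix_def\<close>)
  then show ?thesis
    unfolding char_poly_def by (metis comm_ring_hom.hom_det[OF pcompose_hom.comm_ring_hom_axioms])
qed

lemma det_four_block_mat_scalar_corner:
  fixes A :: "'a :: idom mat"
  assumes A: "A \<in> carrier_mat n n" and B: "B \<in> carrier_mat n k" and C: "C \<in> carrier_mat k n"
  shows "det (four_block_mat A B C (\<mu> \<cdot>\<^sub>m 1\<^sub>m k)) * \<mu> ^ n = det (\<mu> \<cdot>\<^sub>m A - B * C) * \<mu> ^ k"
proof -
  let ?M = "four_block_mat A B C (\<mu> \<cdot>\<^sub>m 1\<^sub>m k)"
  define L where "L = four_block_mat (\<mu> \<cdot>\<^sub>m 1\<^sub>m n) (0\<^sub>m n k) (- C) (1\<^sub>m k)"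
  have "?M * L = four_block_mat (A * (\<mu> \<cdot>\<^sub>m 1\<^sub>m n) + B * - C) (A * 0\<^sub>m n k + B * 1\<^sub>m k)
      (C * (\<mu> \<cdot>\<^sub>m 1\<^sub>m n) + (\<mu> \<cdot>\<^sub>m 1\<^sub>m k) * - C) (C * 0\<^sub>m n k + (\<mu> \<cdot>\<^sub>m 1\<^sub>m k) * 1\<^sub>m k)"
    unfolding L_def by (rule mult_four_block_mat) (use A B C in auto)
  also have "A * (\<mu> \<cdot>\<^sub>m 1\<^sub>m n) + B * - C = \<mu> \<cdot>\<^sub>m A - B * C"
    using A B C mult_smult_distrib[OF A one_carrier_mat, of \<mu>]
    by (simp add: minus_add_uminus_mat[of _ n n])
  also have "A * 0\<^sub>m n k + B * 1\<^sub>m k = B"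
    using A B by simp
  also have "C * (\<mu> \<cdot>\<^sub>m 1\<^sub>m n) + (\<mu> \<cdot>\<^sub>m 1\<^sub>m k) * - C = 0\<^sub>m k n"
    using C mult_smult_distrib[OF C one_carrier_mat, of \<mu>]
      mult_smult_assoc_mat[OF one_carrier_mat C, of \<mu>]
    by (simp add: add_uminus_minus_mat[of _ k n])
  also have "C * 0\<^sub>m n k + (\<mu> \<cdot>\<^sub>m 1\<^sub>m k) * 1\<^sub>m k = \<mu> \<cdot>\<^sub>m 1\<^sub>m k"
    using C by simp
  finally have product: "?M * L = four_block_mat (\<mu> \<cdot>\<^sub>m A - B * C) B (0\<^sub>m k n) (\<mu> \<cdot>\<^sub>m 1\<^sub>m k)" .
  have "det (?M * L) = det ?M * det L"
    by (rule det_mult) (use A B C in \<open>auto simp: L_def\<close>)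
  moreover have "det L = \<mu> ^ n"
    unfolding L_def by (subst det_four_block_mat_upper_right_zero[of _ n _ k]) (use C in auto)
  moreover have "det (?M * L) = det (\<mu> \<cdot>\<^sub>m A - B * C) * \<mu> ^ k"
    unfolding product by (subst det_four_block_mat_lower_left_zero[of _ n _ k]) (use A B C in auto)
  ultimately show ?thesis by simp
qed

lemma const_poly_semiring_hom: "semiring_hom (\<lambda>a :: 'a :: comm_semiring_1. [:a:])"
  by unfold_locales (simp_all add: one_pCons mult.commute)

lemma char_poly_bipartite_block:
  fixes B :: "'a :: idom mat"
  assumes B: "B \<in> carrier_mat k n" and A: "A \<in> carrier_mat n n"
    and gram: "B\<^sup>T * B = c \<cdot>\<^sub>m 1\<^sub>m n + A" and "n \<le> k"
  shows "char_poly (four_block_mat (0\<^sub>m n n) B\<^sup>T B (d \<cdot>\<^sub>m 1\<^sub>m k))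
    = [:-d, 1:] ^ (k - n) * (char_poly A \<circ>\<^sub>p [:-c, -d, 1:])"
proof -
  let ?C = "map_mat (\<lambda>b. [:b:]) B"
  let ?\<mu> = "[:-d, 1:]"
  have C: "?C \<in> carrier_mat k n" using B by simp
  have char_matrix: "char_poly_matrix (four_block_mat (0\<^sub>m n n) B\<^sup>T B (d \<cdot>\<^sub>m 1\<^sub>m k))
      = four_block_mat ([:0, 1:] \<cdot>\<^sub>m 1\<^sub>m n) (- ?C\<^sup>T) (- ?C) (?\<mu> \<cdot>\<^sub>m 1\<^sub>m k)"
    by (rule eq_matI) (use B in \<open>auto simp: char_poly_matrix_def four_block_mat_def\<close>)
  have "char_poly (four_block_mat (0\<^sub>m n n) B\<^sup>T B (d \<cdot>\<^sub>m 1\<^sub>m k)) * ?\<mu> ^ n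
      = det (?\<mu> \<cdot>\<^sub>m ([:0, 1:] \<cdot>\<^sub>m 1\<^sub>m n) - (- ?C\<^sup>T) * (- ?C)) * ?\<mu> ^ k"
    unfolding char_poly_def char_matrix
    by (rule det_four_block_mat_scalar_corner) (use C in auto)
  also have "?\<mu> \<cdot>\<^sub>m ([:0, 1:] \<cdot>\<^sub>m 1\<^sub>m n) - (- ?C\<^sup>T) * (- ?C)
      = [:-c, -d, 1:] \<cdot>\<^sub>m 1\<^sub>m n - map_mat (\<lambda>a. [:a:]) A"
  proof -
    have "?C\<^sup>T * ?C = map_mat (\<lambda>b. [:b:]) (c \<cdot>\<^sub>m 1\<^sub>m n + A)"
      unfolding gram[symmetric] map_mat_transpose
      by (rule semiring_hom.mat_hom_mult[OF const_poly_semiring_hom, symmetric]) (use B in auto)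
    then show ?thesis
      by (intro eq_matI) (use A C in auto)
  qed
  finally have "char_poly (four_block_mat (0\<^sub>m n n) B\<^sup>T B (d \<cdot>\<^sub>m 1\<^sub>m k)) * ?\<mu> ^ n
      = (?\<mu> ^ (k - n) * (char_poly A \<circ>\<^sub>p [:-c, -d, 1:])) * ?\<mu> ^ n"
    using char_poly_pcompose[OF A] \<open>n \<le> k\<close>
    by (simp add: power_add[symmetric])
  then show ?thesis
    by simp
qed

lemma stacked_mat_gram_entry:
  fixes F :: "nat \<Rightarrow> 'a :: comm_semiring_0 mat"
  assumes F: "\<And>k. k < m \<Longrightarrow> F k \<in> carrier_mat r c" and i: "i < c" and j: "j < c"
  defines "S \<equiv> mat (m * r) c (\<lambda>(q, j). F (q div r) $$ (q mod r, j))"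
  shows "(S\<^sup>T * S) $$ (i, j) = (\<Sum>k<m. ((F k)\<^sup>T * F k) $$ (i, j))"
proof -
  let ?f = "\<lambda>q. F (q div r) $$ (q mod r, i) * F (q div r) $$ (q mod r, j)"
  have "(S\<^sup>T * S) $$ (i, j) = (\<Sum>q<m * r. ?f q)"
    using i j by (simp add: S_def scalar_prod_def atLeast0LessThan)
  also have "\<dots> = (\<Sum>k<m. \<Sum>q\<in>{k * r..<k * r + r}. ?f q)"
    by (rule sum.nat_group[symmetric])
  also have "\<dots> = (\<Sum>k<m. \<Sum>s<r. F k $$ (s, i) * F k $$ (s, j))"
  proof (rule sum.cong[OF refl])
    fix k
    have "(\<Sum>q\<in>{k * r..<k * r + r}. ?f q) = (\<Sum>s<r. ?f (s + k * r))"
      using sum.shift_bounds_nat_ivl[of ?f 0 "k * r" r] by (simp add: atLeast0LessThan add.commute)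
    then show "(\<Sum>q\<in>{k * r..<k * r + r}. ?f q) = (\<Sum>s<r. F k $$ (s, i) * F k $$ (s, j))"
      by simp
  qed
  also have "\<dots> = (\<Sum>k<m. ((F k)\<^sup>T * F k) $$ (i, j))"
  proof (rule sum.cong[OF refl])
    fix k assume "k \<in> {..<m}"
    then have "dim_row (F k) = r" "dim_col (F k) = c"
      using F by auto
    then show "(\<Sum>s<r. F k $$ (s, i) * F k $$ (s, j)) = ((F k)\<^sup>T * F k) $$ (i, j)"
      using i j by (simp add: scalar_prod_def atLeast0LessThan)
  qed
  finally show ?thesis .
qed

lemma one_plus_orthogonal_gram:
  fixes G :: "'a :: comm_ring_1 mat"
  assumes G: "G \<in> carrier_mat n n" and orth: "G\<^sup>T * G = 1\<^sub>m n"
  shows "(1\<^sub>m n + G)\<^sup>T * (1\<^sub>m n + G) = 2 \<cdot>\<^sub>m 1\<^sub>m n + G + G\<^sup>T"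
proof -
  have "(1\<^sub>m n + G)\<^sup>T * (1\<^sub>m n + G) = (1\<^sub>m n + G\<^sup>T) * (1\<^sub>m n + G)"
    using transpose_add[OF one_carrier_mat G] by simp
  also have "\<dots> = 1\<^sub>m n + G + (G\<^sup>T + G\<^sup>T * G)"
  proof -
    have GT: "G\<^sup>T \<in> carrier_mat n n" and IG: "1\<^sub>m n + G \<in> carrier_mat n n"
      using G by simp_all
    show ?thesis
      using add_mult_distrib_mat[OF one_carrier_mat GT IG] mult_add_distrib_mat[OF GT one_carrier_mat G] G
      by simp
  qed
  also have "\<dots> = 2 \<cdot>\<^sub>m 1\<^sub>m n + G + G\<^sup>T"
    unfolding orth by (rule eq_matI) (use G in auto)
  finally show ?thesis .
qed

section \<open>Words and permutation matrices\<close>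

lemma word_of_index_Suc: "word_of_index (Suc n) i = i mod 4 # word_of_index n (i div 4)"
proof -
  have "[0..<Suc n] = 0 # map Suc [0..<n]"
    by (simp add: map_Suc_upt upt_conv_Cons)
  then show ?thesis
    unfolding word_of_index_def by (simp add: div_mult2_eq)
qed

lemma bij_betw_word_of_index: "bij_betw (word_of_index n) {..<4 ^ n} (words n)"
proof (induction n)
  case 0
  then show ?case
    by (auto simp: bij_betw_def inj_on_def words_def word_of_index_def)
next
  case (Suc n)
  have "inj_on (word_of_index (Suc n)) {..<4 ^ Suc n}"
  proof (rule inj_onI)
    fix i j assume i: "i \<in> {..<4 ^ Suc n}" and j: "j \<in> {..<4 ^ Suc n}"
      and eq: "word_of_index (Suc n) i = word_of_index (Suc n) j"
    have "i div 4 = j div 4"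
      using eq i j Suc.IH by (auto simp: word_of_index_Suc bij_betw_def inj_on_def)
    moreover have "i mod 4 = j mod 4"
      using eq by (simp add: word_of_index_Suc)
    ultimately show "i = j"
      by (metis div_mod_decomp)
  qed
  moreover have "word_of_index (Suc n) ` {..<4 ^ Suc n} = words (Suc n)"
  proof
    show "word_of_index (Suc n) ` {..<4 ^ Suc n} \<subseteq> words (Suc n)"
      by (auto simp: words_def word_of_index_def)
    show "words (Suc n) \<subseteq> word_of_index (Suc n) ` {..<4 ^ Suc n}"
    proof
      fix w assume "w \<in> words (Suc n)"
      then obtain x v where w: "w = x # v" and x: "x < 4" and v: "v \<in> words n"
        by (cases w) (auto simp: words_def)
      obtain i where i: "i < 4 ^ n" "word_of_index n i = v"
        using v Suc.IH by (force simp: bij_betw_def)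
      have "x + 4 * i < 4 ^ Suc n" and "word_of_index (Suc n) (x + 4 * i) = w"
        using x i w by (simp_all add: word_of_index_Suc)
      then show "w \<in> word_of_index (Suc n) ` {..<4 ^ Suc n}"
        by blast
    qed
  qed
  ultimately show ?case
    by (simp add: bij_betw_def)
qed

lemma word_of_index_in_words: "word_of_index n i \<in> words n"
  by (auto simp: words_def word_of_index_def)

lemma word_of_index_eq_iff:
  "i < 4 ^ n \<Longrightarrow> j < 4 ^ n \<Longrightarrow> word_of_index n i = word_of_index n j \<longleftrightarrow> i = j"
  using bij_betw_word_of_index[of n] by (auto simp: bij_betw_def inj_on_def)

lemma word_of_index_surj:
  assumes "w \<in> words n"
  obtains i where "i < 4 ^ n" and "word_of_index n i = w"
  using assms bij_betw_word_of_index[of n] by (force simp: bij_betw_def)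

lemma dim_perm_mat [simp]: "dim_row (perm_mat n g) = 4 ^ n" "dim_col (perm_mat n g) = 4 ^ n"
  by (simp_all add: perm_mat_def)

lemma dim_schreier_adj [simp]: "dim_row (schreier_adj n) = 4 ^ n" "dim_col (schreier_adj n) = 4 ^ n"
  by (simp_all add: schreier_adj_def perm_mat_inv_def)

lemma perm_mat_inv_eq_transpose:
  assumes g: "bij_betw g (words n) (words n)"
  shows "perm_mat_inv n g = (perm_mat n g)\<^sup>T"
proof (rule eq_matI)
  fix i j assume "i < dim_row (perm_mat n g)\<^sup>T" "j < dim_col (perm_mat n g)\<^sup>T"
  then have "i < 4 ^ n" "j < 4 ^ n"
    by (auto simp: perm_mat_def)
  moreover have "the_inv_into (words n) g v = u \<longleftrightarrow> g u = v" if "u \<in> words n" "v \<in> words n" for u v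
    using that g by (auto simp: bij_betw_def f_the_inv_into_f the_inv_into_f_f)
  ultimately show "perm_mat_inv n g $$ (i, j) = (perm_mat n g)\<^sup>T $$ (i, j)"
    by (simp add: perm_mat_inv_def perm_mat_def word_of_index_in_words)
qed (simp_all add: perm_mat_inv_def perm_mat_def)

lemma perm_mat_orthogonal:
  assumes g: "bij_betw g (words n) (words n)"
  shows "(perm_mat n g)\<^sup>T * perm_mat n g = 1\<^sub>m (4 ^ n)"
proof (rule eq_matI)
  fix i j assume "i < dim_row (1\<^sub>m (4 ^ n) :: int mat)" "j < dim_col (1\<^sub>m (4 ^ n) :: int mat)"
  then have i: "i < 4 ^ n" and j: "j < 4 ^ n"
    by auto
  obtain r where r: "r < 4 ^ n" "word_of_index n r = g (word_of_index n i)"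
    using g word_of_index_in_words by (metis bij_betwE word_of_index_surj)
  have "((perm_mat n g)\<^sup>T * perm_mat n g) $$ (i, j)
      = (\<Sum>s<4 ^ n. perm_mat n g $$ (s, i) * perm_mat n g $$ (s, j))"
    using i j by (simp add: perm_mat_def scalar_prod_def atLeast0LessThan)
  also have "\<dots> = (\<Sum>s<4 ^ n. if s = r then perm_mat n g $$ (s, j) else 0)"
    using i r by (intro sum.cong) (auto simp: perm_mat_def word_of_index_eq_iff)
  also have "\<dots> = (if g (word_of_index n j) = g (word_of_index n i) then 1 else 0)"
    using r j by (simp add: perm_mat_def)
  also have "\<dots> = 1\<^sub>m (4 ^ n) $$ (i, j)"
    using inj_on_eq_iff[OF bij_betw_imp_inj_on[OF g] word_of_index_in_words word_of_index_in_words] i j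
    by (simp add: word_of_index_eq_iff)
  finally show "((perm_mat n g)\<^sup>T * perm_mat n g) $$ (i, j) = 1\<^sub>m (4 ^ n) $$ (i, j)" .
qed (simp_all add: perm_mat_def)

section \<open>The Schreier graphs of the star automaton group\<close>

fun star_gen :: "nat \<Rightarrow> nat list \<Rightarrow> nat list" where
  "star_gen k [] = []"
| "star_gen k (x # w) = (if x = 0 then k # star_gen k w else if x = k then 0 # w else x # w)"

lemma act_eq_star_gen: "act_a = star_gen 1" "act_b = star_gen 2" "act_c = star_gen 3"
proof -
  have "act_a w = star_gen 1 w" "act_b w = star_gen 2 w" "act_c w = star_gen 3 w" for w
    by (induction w) auto
  then show "act_a = star_gen 1" "act_b = star_gen 2" "act_c = star_gen 3"
    by auto
qed

lemma inj_star_gen: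
  assumes "0 < k"
  shows "inj (star_gen k)"
proof (rule injI)
  show "star_gen k v = star_gen k w \<Longrightarrow> v = w" for v w
  proof (induction v arbitrary: w)
    case Nil
    then show ?case by (cases w) (auto split: if_splits)
  next
    case (Cons x v)
    then show ?case using assms by (cases w) (auto split: if_splits)
  qed
qed

lemma bij_betw_star_gen:
  assumes "0 < k" "k < 4"
  shows "bij_betw (star_gen k) (words n) (words n)"
proof -
  have "star_gen k w \<in> words n" if "w \<in> words n" for w
  proof -
    have "length (star_gen k w) = length w \<and> (set w \<subseteq> {0..<4} \<longrightarrow> set (star_gen k w) \<subseteq> {0..<4})"
      using assms by (induction w) auto
    then show ?thesis
      using that by (simp add: words_def)
  qed
  moreover have "finite (words n)"
    using bij_betw_finite[OF bij_betw_word_of_index[of n]] by simp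
  moreover have "inj_on (star_gen k) (words n)"
    using inj_star_gen[OF assms(1)] by (rule inj_on_subset) simp
  ultimately show ?thesis
    by (simp add: bij_betw_def endo_inj_surj image_subsetI)
qed

abbreviation star_gen_mat :: "nat \<Rightarrow> nat \<Rightarrow> int mat" where
  "star_gen_mat n k \<equiv> perm_mat n (star_gen k)"

lemma schreier_adj_eq_star_gen_mat:
  "schreier_adj n = star_gen_mat n 1 + (star_gen_mat n 1)\<^sup>T + star_gen_mat n 2 + (star_gen_mat n 2)\<^sup>T
    + star_gen_mat n 3 + (star_gen_mat n 3)\<^sup>T"
  by (simp add: schreier_adj_def act_eq_star_gen perm_mat_inv_eq_transpose bij_betw_star_gen)

lemma star_gen_mat_Suc:
  assumes "0 < k" "x < 4" "y < 4" "i < 4 ^ n" "j < 4 ^ n"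
  shows "star_gen_mat (Suc n) k $$ (x + 4 * i, y + 4 * j) =
    (if y = 0 then if x = k then star_gen_mat n k $$ (i, j) else 0
     else if (y = k \<and> x = 0) \<or> (y \<noteq> k \<and> x = y) then 1\<^sub>m (4 ^ n) $$ (i, j) else 0)"
  using assms by (auto simp: perm_mat_def word_of_index_Suc word_of_index_eq_iff)

lemma schreier_adj_Suc_entry:
  assumes x: "x < 4" and y: "y < 4" and i: "i < 4 ^ n" and j: "j < 4 ^ n"
  shows "schreier_adj (Suc n) $$ (x + 4 * i, y + 4 * j) =
    (if x = 0 then if y = 0 then 0 else (1\<^sub>m (4 ^ n) + star_gen_mat n y) $$ (j, i)
     else if y = 0 then (1\<^sub>m (4 ^ n) + star_gen_mat n x) $$ (i, j)
     else if x = y then 4 * 1\<^sub>m (4 ^ n) $$ (i, j) else 0)"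
proof -
  have "x + 4 * i < 4 ^ Suc n" "y + 4 * j < 4 ^ Suc n"
    using x y i j by simp_all
  then have "schreier_adj (Suc n) $$ (x + 4 * i, y + 4 * j) =
    (\<Sum>k\<in>{1, 2, 3}. star_gen_mat (Suc n) k $$ (x + 4 * i, y + 4 * j)
                      + star_gen_mat (Suc n) k $$ (y + 4 * j, x + 4 * i))"
    by (simp add: schreier_adj_eq_star_gen_mat)
  also have "\<dots> = (\<Sum>k\<in>{1, 2, 3}.
      (if y = 0 then if x = k then star_gen_mat n k $$ (i, j) else 0
       else if (y = k \<and> x = 0) \<or> (y \<noteq> k \<and> x = y) then 1\<^sub>m (4 ^ n) $$ (i, j) else 0)
    + (if x = 0 then if y = k then star_gen_mat n k $$ (j, i) else 0
       else if (x = k \<and> y = 0) \<or> (x \<noteq> k \<and> y = x) then 1\<^sub>m (4 ^ n) $$ (j, i) else 0))"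
    using x y i j by (intro sum.cong) (auto simp only: star_gen_mat_Suc insert_iff empty_iff)
  also have "\<dots> = (if x = 0 then if y = 0 then 0 else (1\<^sub>m (4 ^ n) + star_gen_mat n y) $$ (j, i)
     else if y = 0 then (1\<^sub>m (4 ^ n) + star_gen_mat n x) $$ (i, j)
     else if x = y then 4 * 1\<^sub>m (4 ^ n) $$ (i, j) else 0)"
  proof -
    have "x \<in> {0, 1, 2, 3}" "y \<in> {0, 1, 2, 3}"
      using x y by auto
    then show ?thesis
      using i j by (elim insertE; simp)
  qed
  finally show ?thesis .
qed

definition schreier_biadj :: "nat \<Rightarrow> int mat" where
  "schreier_biadj n = mat (3 * 4 ^ n) (4 ^ n)
     (\<lambda>(q, j). (1\<^sub>m (4 ^ n) + star_gen_mat n (q div 4 ^ n + 1)) $$ (q mod 4 ^ n, j))"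

lemma dim_schreier_biadj [simp]:
  "dim_row (schreier_biadj n) = 3 * 4 ^ n" "dim_col (schreier_biadj n) = 4 ^ n"
  by (simp_all add: schreier_biadj_def)

lemma schreier_biadj_gram: "(schreier_biadj n)\<^sup>T * schreier_biadj n = 6 \<cdot>\<^sub>m 1\<^sub>m (4 ^ n) + schreier_adj n"
proof (rule eq_matI)
  fix i j assume "i < dim_row (6 \<cdot>\<^sub>m 1\<^sub>m (4 ^ n) + schreier_adj n)"
    and "j < dim_col (6 \<cdot>\<^sub>m 1\<^sub>m (4 ^ n) + schreier_adj n)"
  then have i: "i < 4 ^ n" and j: "j < 4 ^ n"
    by auto
  let ?F = "\<lambda>k. 1\<^sub>m (4 ^ n) + star_gen_mat n (k + 1)"
  have "((schreier_biadj n)\<^sup>T * schreier_biadj n) $$ (i, j) = (\<Sum>k<3. ((?F k)\<^sup>T * ?F k) $$ (i, j))"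
    unfolding schreier_biadj_def by (rule stacked_mat_gram_entry[where F = ?F]) (use i j in auto)
  also have "\<dots> = (\<Sum>k<3. (2 \<cdot>\<^sub>m 1\<^sub>m (4 ^ n) + star_gen_mat n (k + 1) + (star_gen_mat n (k + 1))\<^sup>T) $$ (i, j))"
    by (intro sum.cong refl arg_cong[where f = "\<lambda>M. M $$ (i, j)"] one_plus_orthogonal_gram
        perm_mat_orthogonal bij_betw_star_gen) (auto simp: perm_mat_def)
  also have "\<dots> = (6 \<cdot>\<^sub>m 1\<^sub>m (4 ^ n) + schreier_adj n) $$ (i, j)"
    using i j by (simp add: schreier_adj_eq_star_gen_mat numeral_3_eq_3 numeral_2_eq_2 lessThan_Suc)
  finally show "((schreier_biadj n)\<^sup>T * schreier_biadj n) $$ (i, j) = (6 \<cdot>\<^sub>m 1\<^sub>m (4 ^ n) + schreier_adj n) $$ (i, j)" .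
qed (simp_all add: schreier_biadj_def)

(* word_of_index reads the first letter as the least significant digit, so reindexing by
   grid_transpose 4 (4 ^ n) lists the words of length n + 1 by first letter. *)

lemma schreier_adj_Suc_blocks:
  "mat (4 * 4 ^ n) (4 * 4 ^ n)
     (\<lambda>(p, q). schreier_adj (Suc n) $$ (grid_transpose 4 (4 ^ n) p, grid_transpose 4 (4 ^ n) q))
   = four_block_mat (0\<^sub>m (4 ^ n) (4 ^ n)) (schreier_biadj n)\<^sup>T (schreier_biadj n) (4 \<cdot>\<^sub>m 1\<^sub>m (3 * 4 ^ n))"
  (is "?L = ?R")
proof (rule eq_matI)
  let ?N = "4 ^ n :: nat"
  fix p q assume "p < dim_row ?R" "q < dim_col ?R"
  then have p: "p < 4 * ?N" and q: "q < 4 * ?N"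
    by (simp_all add: schreier_biadj_def)
  have letters: "p div ?N < 4" "q div ?N < 4"
    using p q by (simp_all add: less_mult_imp_div_less)
  have rests: "p mod ?N < ?N" "q mod ?N < ?N"
    by simp_all
  have "?L $$ (p, q) = schreier_adj (Suc n) $$ (p div ?N + 4 * (p mod ?N), q div ?N + 4 * (q mod ?N))"
    using p q by (simp add: grid_transpose_def)
  also have "\<dots> = ?R $$ (p, q)"
  proof -
    note entry = schreier_adj_Suc_entry[OF letters rests]
    have shift: "(r - ?N) div ?N + 1 = r div ?N" "(r - ?N) mod ?N = r mod ?N" "r - ?N < 3 * ?N"
      if "\<not> r < ?N" "r < 4 * ?N" for r
      using that by (simp_all add: le_div_geq le_mod_geq)
    have eq_iff: "p = q \<longleftrightarrow> p div ?N = q div ?N \<and> p mod ?N = q mod ?N"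
      by (metis div_mod_decomp)
    have R: "?R $$ (p, q) = (if p < ?N then if q < ?N then 0 else schreier_biadj n $$ (q - ?N, p)
        else if q < ?N then schreier_biadj n $$ (p - ?N, q) else 4 * 1\<^sub>m (3 * ?N) $$ (p - ?N, q - ?N))"
      using p q by (simp add: four_block_mat_def Let_def)
    consider "p < ?N" "q < ?N" | "p < ?N" "\<not> q < ?N" | "\<not> p < ?N" "q < ?N" | "\<not> p < ?N" "\<not> q < ?N"
      by blast
    then show ?thesis
    proof cases
      case 1
      then show ?thesis unfolding entry R by simp
    next
      case 2
      then show ?thesis unfolding entry R using q shift[of q] by (simp add: schreier_biadj_def)
    next
      case 3
      then show ?thesis unfolding entry R using p shift[of p] by (simp add: schreier_biadj_def)
    next
      case 4
      then have "p - ?N = q - ?N \<longleftrightarrow> p div ?N = q div ?N \<and> p mod ?N = q mod ?N"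
        using eq_iff by auto
      then show ?thesis unfolding entry R using 4 p q shift[of p] shift[of q] by auto
    qed
  qed
  finally show "?L $$ (p, q) = ?R $$ (p, q)" .
qed (simp_all add: schreier_biadj_def)

lemma P_Suc: "P (Suc n) = [:-4, 1:] ^ (2 * 4 ^ n) * (P n \<circ>\<^sub>p [:-6, -4, 1:])"
proof -
  let ?\<sigma> = "grid_transpose 4 (4 ^ n)"
  have "P (Suc n) = char_poly (mat (4 * 4 ^ n) (4 * 4 ^ n)
      (\<lambda>(p, q). schreier_adj (Suc n) $$ (?\<sigma> p, ?\<sigma> q)))"
    unfolding P_def by (rule char_poly_permute[symmetric]) (simp_all add: carrier_matI grid_transpose_permutes)
  also have "\<dots> = char_poly (four_block_mat (0\<^sub>m (4 ^ n) (4 ^ n)) (schreier_biadj n)\<^sup>T (schreier_biadj n)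
      (4 \<cdot>\<^sub>m 1\<^sub>m (3 * 4 ^ n)))"
    by (simp only: schreier_adj_Suc_blocks)
  also have "\<dots> = [:-4, 1:] ^ (3 * 4 ^ n - 4 ^ n) * (P n \<circ>\<^sub>p [:-6, -4, 1:])"
    unfolding P_def
    by (rule char_poly_bipartite_block) (simp_all add: carrier_matI schreier_biadj_gram)
  finally show ?thesis
    by simp
qed

lemma P_0: "P 0 = [:-6, 1:]"
proof -
  have "schreier_adj 0 = 6 \<cdot>\<^sub>m 1\<^sub>m 1"
    by (rule eq_matI) (simp_all add: schreier_adj_eq_star_gen_mat perm_mat_def word_of_index_def)
  then show ?thesis
    unfolding P_def
    by (subst char_poly_upper_triangular[of _ 1]) (auto simp: upper_triangular_def diag_mat_def)
qed

theorem theorem3p2: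
  shows "(\<forall>n::nat. n \<ge> 1 \<longrightarrow>
           P (n + 1) = [:-4, 1:] ^ (2 * 4 ^ n) * pcompose (P n) [:-6, -4, 1:])
         \<and> P 1 = [:-6, 1:] * [:2, 1:] * [:-4, 1:] ^ 2"
proof
  show "\<forall>n::nat. n \<ge> 1 \<longrightarrow> P (n + 1) = [:-4, 1:] ^ (2 * 4 ^ n) * pcompose (P n) [:-6, -4, 1:]"
    using P_Suc by simp
  have "P 1 = [:-4, 1:] ^ 2 * ([:-6, 1:] \<circ>\<^sub>p [:-6, -4, 1:])"
    using P_Suc[of 0] P_0 by simp
  then show "P 1 = [:-6, 1:] * [:2, 1:] * [:-4, 1:] ^ 2"
    by (simp add: eval_nat_numeral)
qed

end
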